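(* Let $N>2$, $1<p<N$, and assume (H1)–(H4). For $a>0$ let $v_a$ be the solution on $[0,T]$ of $$(|v'(t)|^{p-2}v'(t))'+h(t)f(v(t))=0,\qquad v(0)=0,\ v'(0)=a.$$ Then for all sufficiently large $a$, $v_a$ has a first local maximum $M_a\in(0,T)$ (i.e. $v_a'(M_a)=0$ and $v_a'>0$ on $[0,M_a)$), and $M_a\to 0$ and $v_a(M_a)\to\infty$ as $a\to\infty$.
   Context: Standing hypotheses. $f:\mathbb{R}\setminus\{0\}\to\mathbb{R}$ is odd and locally Lipschitz, and: (H1) there is a locally Lipschitz $g_1:\mathbb{R}\to\mathbb{R}$ and $l>p-1$ with $f(u)=|u|^{l-1}u+g_1(u)$ for all large $|u|$, and $\lim_{u\to\infty}|g_1(u)|/|u|^l=0$; (H2) there is a locally Lipschitz $g_2:\mathbb{R}\to\mathbb{R}$ with $g_2(0)=0$ and $0<m<1$ such that $f(u)=-\frac{1}{|u|^{m-1}u}+g_2(u)$ for all small $|u|\neq 0$; (H3) $f$ has a unique positive zero $\beta$, with $f<0$ on $(0,\beta)$ and $f>0$ on $(\beta,\infty)$; (H4) $K>0$ and $K'$ are continuous on $[R,\infty)$ (for a fixed $R>0$), $\frac{rK'(r)}{K(r)}>-\frac{(N-1)p}{p-1}$ on $[R,\infty)$, and there are constants $K_0,K_1>0$ with $\frac{K_0}{r^{\alpha}}\le K(r)\le \frac{K_1}{r^{\alpha_1}}$ on $[R,\infty)$, where $N+\frac{m(N-p)}{p-1}<\alpha_1\le\alpha<2(N-1)$. Notation: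 $T=R^{\frac{p-N}{p-1}}$ and, for $0<t\le T$, $h(t)=\left(\frac{N-p}{p-1}\right)^{-p}t^{\frac{p(N-1)}{p-N}}K\!\left(t^{\frac{p-1}{p-N}}\right)>0$. A solution of the initial value problem on an interval $[0,d]$ means $v\in C^1[0,d]$ such that $t\mapsto h(t)f(v(t))$ is integrable on $(0,t)$ for each $t\le d$ and $|v'(t)|^{p-2}v'(t)=a^{p-1}-\int_0^t h(s)f(v(s))\,ds$, $v(0)=0$; it exists uniquely on $[0,T]$ for each $a>0$. *)

theory Defs
  imports "HOL-Analysis.Analysis"
begin

definition loc_lipschitz_on :: "real set \<Rightarrow> (real \<Rightarrow> real) \<Rightarrow> bool" where
  "loc_lipschitz_on S g \<longleftrightarrow>
     (\<forall>x\<in>S. \<exists>e>0. \<exists>L. \<forall>y\<in>ball x e \<inter> S. \<forall>z\<in>ball x e \<inter> S. \<bar>g y - g z\<bar> \<le> L * \<bar>y - z\<bar>)"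

definition phi_p :: "real \<Rightarrow> real \<Rightarrow> real" where
  "phi_p p x = \<bar>x\<bar> powr (p - 2) * x"

definition hfun :: "nat \<Rightarrow> real \<Rightarrow> (real \<Rightarrow> real) \<Rightarrow> real \<Rightarrow> real" where
  "hfun N p K t = ((real N - p) / (p - 1)) powr (- p) * t powr (p * (real N - 1) / (p - real N))
                  * K (t powr ((p - 1) / (p - real N)))"

definition is_solution ::
  "(real \<Rightarrow> real) \<Rightarrow> (real \<Rightarrow> real) \<Rightarrow> real \<Rightarrow> real \<Rightarrow> real \<Rightarrow> (real \<Rightarrow> real) \<Rightarrow> (real \<Rightarrow> real) \<Rightarrow> bool"
  where
  "is_solution h f p a d v v' \<longleftrightarrow>
     continuous_on {0..d} v' \<and>
     (\<forall>t\<in>{0..d}. (v has_real_derivative v' t) (at t within {0..d})) \<and>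
     v 0 = 0 \<and>
     (\<forall>t\<in>{0..d}. (\<lambda>s. h s * f (v s)) integrable_on {0..t} \<and>
        phi_p p (v' t) = a powr (p - 1) - integral {0..t} (\<lambda>s. h s * f (v s)))"

end

theory Submission
  imports Defs "HOL-Real_Asymp.Real_Asymp"
begin

(*
  If v_a' stayed positive on [0, eps], then v_a would rise with slope at least a while f(v_a) < 0,
  so it passes beta before eps/4; from then on phi_p(v_a') decreases, and the mean value theorem
  on [eps/4, eps/2] bounds phi_p(v_a'(eps/2)) by phi_p(4 Y / eps), where Y = v_a(eps/2).
  As f grows faster than u^(p-1), integrating h f(v_a) over [eps/2, eps] would make v_a'(eps)
  nonpositive unless Y stays below a threshold independent of a; but then
  a^(p-1) = phi_p(v_a'(eps/2)) + int_0^(eps/2) h f(v_a) is bounded.  Hence for large a the first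
  zero M_a of v_a' lies in (0, eps].  At M_a the identity a^(p-1) = int_0^(M_a) h f(v_a), together
  with h(t) <= C t^gamma for some gamma > -1, forces v_a(M_a) to infinity.
*)

lemma phi_p_nonneg_eq_powr:
  assumes "0 \<le> x"
  shows "phi_p p x = x powr (p - 1)"
proof (cases "x = 0")
  case False
  with assms have "phi_p p x = x * x powr (p - 2)" by (simp add: phi_p_def)
  also have "\<dots> = x powr (p - 1)" using False assms by (simp add: powr_mult_base)
  finally show ?thesis .
qed (simp add: phi_p_def)

lemma phi_p_minus: "phi_p p (- x) = - phi_p p x"
  by (simp add: phi_p_def)

lemma strict_mono_phi_p:
  assumes "1 < p"
  shows "strict_mono (phi_p p)"
proof (rule strict_monoI)
  have nonneg: "phi_p p x < phi_p p y" if "0 \<le> x" "x < y" for x y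
    using that assms by (simp add: phi_p_nonneg_eq_powr powr_less_mono2)
  fix x y :: real
  assume "x < y"
  consider "0 \<le> x" | "y \<le> 0" | "x < 0" "0 < y" by linarith
  then show "phi_p p x < phi_p p y"
  proof cases
    case 1
    with nonneg \<open>x < y\<close> show ?thesis by blast
  next
    case 2
    with nonneg[of "- y" "- x"] \<open>x < y\<close> show ?thesis by (simp add: phi_p_minus)
  next
    case 3
    then have "phi_p p x < 0" by (simp add: phi_p_def mult_pos_neg)
    moreover have "0 < phi_p p y" using 3 by (simp add: phi_p_nonneg_eq_powr)
    ultimately show ?thesis by linarith
  qed
qed

lemma filterlim_phi_p_at_top:
  assumes "1 < p"
  shows "filterlim (phi_p p) at_top at_top"
proof -
  have "eventually (\<lambda>x. x powr (p - 1) = phi_p p x) at_top"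
    using eventually_ge_at_top[of 0] by eventually_elim (simp add: phi_p_nonneg_eq_powr)
  then have "filterlim (\<lambda>x. x powr (p - 1)) at_top at_top = filterlim (phi_p p) at_top at_top"
    by (rule filterlim_cong[OF refl refl])
  with real_powr_at_top[of "p - 1"] assms show ?thesis by simp
qed

lemma real_mvt_within:
  fixes g g' :: "real \<Rightarrow> real"
  assumes "x < y"
    and "\<And>t. t \<in> {x..y} \<Longrightarrow> (g has_real_derivative g' t) (at t within {x..y})"
  shows "\<exists>\<xi>\<in>{x<..<y}. g y - g x = g' \<xi> * (y - x)"
  using mvt_simple[OF assms(1), of g "\<lambda>t. (*) (g' t)"] assms(2)
  by (simp add: has_field_derivative_def)

lemma strict_mono_on_of_deriv_pos:
  fixes g g' :: "real \<Rightarrow> real"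
  assumes deriv: "\<And>t. t \<in> {a..b} \<Longrightarrow> (g has_real_derivative g' t) (at t within {a..b})"
    and pos: "\<And>t. t \<in> {a<..<b} \<Longrightarrow> 0 < g' t"
  shows "strict_mono_on {a..b} g"
proof (rule strict_mono_onI)
  fix x y
  assume xy: "x \<in> {a..b}" "y \<in> {a..b}" "x < y"
  have "(g has_real_derivative g' t) (at t within {x..y})" if "t \<in> {x..y}" for t
    using deriv[of t] that xy by (auto intro: DERIV_subset)
  then obtain \<xi> where "\<xi> \<in> {x<..<y}" "g y - g x = g' \<xi> * (y - x)"
    using real_mvt_within[OF \<open>x < y\<close>] by blast
  moreover have "0 < g' \<xi>"
    using pos xy \<open>\<xi> \<in> {x<..<y}\<close> by auto
  ultimately have "0 < g y - g x"
    using \<open>x < y\<close> by simp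
  then show "g x < g y" by simp
qed

(*
  (H1)-(H4) enter only through the following properties of h and f.  The value f 0 is unspecified,
  and h 0 = 0 keeps it out of the integrals.
*)
locale shooting_problem =
  fixes p \<gamma> Ch T \<beta> :: real and h f :: "real \<Rightarrow> real" and v v' :: "real \<Rightarrow> real \<Rightarrow> real"
  assumes p_gt_1: "1 < p" and T_pos: "0 < T"
    and h_0: "h 0 = 0"
    and h_pos: "\<And>t. t \<in> {0<..T} \<Longrightarrow> 0 < h t"
    and h_cont: "continuous_on {0<..T} h"
    and Ch_pos: "0 < Ch" and \<gamma>_gt: "-1 < \<gamma>"
    and h_le_power: "\<And>t. t \<in> {0<..T} \<Longrightarrow> h t \<le> Ch * t powr \<gamma>"
    and f_cont: "continuous_on {0<..} f"
    and \<beta>_pos: "0 < \<beta>" and f_\<beta>: "f \<beta> = 0"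
    and f_neg: "\<And>u. 0 < u \<Longrightarrow> u < \<beta> \<Longrightarrow> f u < 0"
    and f_pos: "\<And>u. \<beta> < u \<Longrightarrow> 0 < f u"
    and f_superlinear: "\<And>c. eventually (\<lambda>u. c * u powr (p - 1) \<le> f u) at_top"
    and solution: "\<And>a. 0 < a \<Longrightarrow> is_solution h f p a T (v a) (v' a)"
begin

definition I :: "real \<Rightarrow> real \<Rightarrow> real" where
  "I a t = integral {0..t} (\<lambda>s. h s * f (v a s))"

lemma f_nonneg: "\<beta> \<le> u \<Longrightarrow> 0 \<le> f u"
  using f_\<beta> f_pos[of u] by (cases "u = \<beta>") auto

lemma f_bounded_above: "\<exists>C\<ge>0. \<forall>u\<in>{0<..B}. f u \<le> C"
proof -
  have "continuous_on {\<beta>..max \<beta> B} f"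
    by (rule continuous_on_subset[OF f_cont]) (use \<beta>_pos in auto)
  then obtain u0 where u0: "\<forall>u\<in>{\<beta>..max \<beta> B}. f u \<le> f u0"
    using continuous_attains_sup[of "{\<beta>..max \<beta> B}" f] by auto
  have "f u \<le> max 0 (f u0)" if "u \<in> {0<..B}" for u
    using u0 f_neg[of u] that by (cases "u < \<beta>") (auto simp: le_max_iff_disj)
  then show ?thesis by (intro exI[of _ "max 0 (f u0)"]) auto
qed

lemma h_bounded_below:
  assumes "0 < x" "y \<le> T"
  shows "\<exists>c>0. \<forall>t\<in>{x..y}. c \<le> h t"
proof (cases "x \<le> y")
  case True
  have "continuous_on {x..y} h"
    by (rule continuous_on_subset[OF h_cont]) (use assms in auto)
  then obtain t0 where "t0 \<in> {x..y}" "\<forall>t\<in>{x..y}. h t0 \<le> h t"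
    using continuous_attains_inf[of "{x..y}" h] True by auto
  moreover have "0 < h t0"
    using h_pos \<open>t0 \<in> {x..y}\<close> assms by auto
  ultimately show ?thesis by blast
qed (auto intro!: exI[of _ 1])

lemma v_0: "0 < a \<Longrightarrow> v a 0 = 0"
  using solution unfolding is_solution_def by blast

lemma v'_cont: "0 < a \<Longrightarrow> continuous_on {0..T} (v' a)"
  using solution unfolding is_solution_def by blast

lemma v_deriv: "0 < a \<Longrightarrow> t \<in> {0..T} \<Longrightarrow> (v a has_real_derivative v' a t) (at t within {0..T})"
  using solution unfolding is_solution_def by blast

lemma hf_integrable: "0 < a \<Longrightarrow> t \<in> {0..T} \<Longrightarrow> (\<lambda>s. h s * f (v a s)) integrable_on {0..t}"
  using solution unfolding is_solution_def by blast

lemma phi_v'_eq: "0 < a \<Longrightarrow> t \<in> {0..T} \<Longrightarrow> phi_p p (v' a t) = phi_p p a - I a t"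
  using solution[of a] phi_p_nonneg_eq_powr[of a p] unfolding is_solution_def I_def by auto

lemma v'_0_pos:
  assumes "0 < a"
  shows "0 < v' a 0"
proof -
  have "phi_p p (v' a 0) = phi_p p a"
    using phi_v'_eq[OF assms, of 0] T_pos by (simp add: I_def)
  with assms show ?thesis
    using strict_mono_less[OF strict_mono_phi_p[OF p_gt_1]] by metis
qed

lemma v_mvt:
  assumes "0 < a" "0 \<le> x" "x < y" "y \<le> T"
  shows "\<exists>\<xi>\<in>{x<..<y}. v a y - v a x = v' a \<xi> * (y - x)"
  by (rule real_mvt_within) (use assms in \<open>auto intro!: DERIV_subset[OF v_deriv]\<close>)

lemma v_strict_mono_on:
  assumes "0 < a" "e \<le> T" "\<forall>t\<in>{0..<e}. 0 < v' a t"
  shows "strict_mono_on {0..e} (v a)"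
  by (rule strict_mono_on_of_deriv_pos[where g' = "v' a"])
    (use assms in \<open>auto intro!: DERIV_subset[OF v_deriv]\<close>)

lemma I_increment_ge:
  assumes "0 < a" "0 \<le> x" "x \<le> y" "y \<le> T" "\<And>s. s \<in> {x..y} \<Longrightarrow> c \<le> h s * f (v a s)"
  shows "I a x + c * (y - x) \<le> I a y"
proof -
  have integrable: "(\<lambda>s. h s * f (v a s)) integrable_on {0..y}"
    using hf_integrable assms by simp
  then have "(\<lambda>s. h s * f (v a s)) integrable_on {x..y}"
    using integrable_subinterval_real assms by fastforce
  then have "c * (y - x) \<le> integral {x..y} (\<lambda>s. h s * f (v a s))"
    using integral_le[of "\<lambda>_. c" "{x..y}"] assms by (simp add: mult.commute) blast
  moreover have "I a y = I a x + integral {x..y} (\<lambda>s. h s * f (v a s))"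
    unfolding I_def using Henstock_Kurzweil_Integration.integral_combine[OF _ _ integrable, of x] assms
    by simp
  ultimately show ?thesis by simp
qed

lemma I_le_power_bound:
  assumes "0 < a" "0 \<le> b" "b \<le> T" "0 \<le> C" "\<And>s. s \<in> {0<..b} \<Longrightarrow> f (v a s) \<le> C"
  shows "I a b \<le> C * Ch * b powr (\<gamma> + 1) / (\<gamma> + 1)"
proof -
  have majorant: "((\<lambda>s. C * Ch * s powr \<gamma>) has_integral C * Ch * b powr (\<gamma> + 1) / (\<gamma> + 1)) {0..b}"
    using has_integral_mult_right[OF has_integral_powr_from_0[of \<gamma> b], of "C * Ch"] \<gamma>_gt assms
    by simp
  have "h s * f (v a s) \<le> C * Ch * s powr \<gamma>" if "s \<in> {0..b}" for s
  proof (cases "s = 0")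
    case False
    with that assms have s: "s \<in> {0<..T}" "s \<in> {0<..b}" by auto
    have "h s * f (v a s) \<le> h s * C"
      using h_pos[OF s(1)] assms(5)[OF s(2)] by simp
    also have "\<dots> \<le> Ch * s powr \<gamma> * C"
      using h_le_power[OF s(1)] assms(4) by (rule mult_right_mono)
    finally show ?thesis by (simp add: algebra_simps)
  qed (simp add: h_0)
  then show ?thesis
    unfolding I_def using integral_le[OF hf_integrable[of a b] _] majorant assms
    by (metis (no_types, lifting) atLeastAtMost_iff has_integral_integrable integral_unique)
qed

context
  fixes a \<epsilon> :: real
  assumes a_pos: "0 < a" and \<epsilon>_pos: "0 < \<epsilon>" and \<epsilon>_le_T: "\<epsilon> \<le> T"
    and v'_pos: "\<forall>t\<in>{0..\<epsilon>}. 0 < v' a t"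
begin

lemma v_strict_mono_on_\<epsilon>: "strict_mono_on {0..\<epsilon>} (v a)"
  using v_strict_mono_on[OF a_pos \<epsilon>_le_T] v'_pos by simp

lemma v_pos: "s \<in> {0<..\<epsilon>} \<Longrightarrow> 0 < v a s"
  using strict_mono_onD[OF v_strict_mono_on_\<epsilon>, of 0 s] v_0[OF a_pos] \<epsilon>_pos by simp

lemma v_reaches_\<beta>:
  assumes s: "s \<in> {0<..\<epsilon>}" and "\<beta> \<le> a * s"
  shows "\<beta> \<le> v a s"
proof (rule ccontr)
  assume below: "\<not> \<beta> \<le> v a s"
  have "a \<le> v' a r" if r: "r \<in> {0<..s}" for r
  proof -
    have "f (v a r') \<le> 0" if "r' \<in> {0<..r}" for r'
    proof -
      have "v a r' \<le> v a s"
        using strict_mono_on_leD[OF v_strict_mono_on_\<epsilon>, of r' s] that r s by simp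
      with v_pos[of r'] below that r s show ?thesis
        using f_neg[of "v a r'"] by simp
    qed
    then have "I a r \<le> 0"
      using I_le_power_bound[OF a_pos, of r 0] r s \<epsilon>_le_T by simp
    then have "phi_p p a \<le> phi_p p (v' a r)"
      using phi_v'_eq[OF a_pos, of r] r s \<epsilon>_le_T by simp
    then show ?thesis
      using strict_mono_less_eq[OF strict_mono_phi_p[OF p_gt_1]] by blast
  qed
  moreover obtain \<xi> where "\<xi> \<in> {0<..<s}" "v a s - v a 0 = v' a \<xi> * (s - 0)"
    using v_mvt[OF a_pos, of 0 s] s \<epsilon>_le_T by auto
  ultimately have "a * s \<le> v a s"
    using v_0[OF a_pos] s by (simp add: mult_right_mono)
  with below \<open>\<beta> \<le> a * s\<close> show False by simp
qed

lemma phi_v'_le_phi_slope: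
  assumes "0 \<le> x" "x < y" "y \<le> \<epsilon>" "\<beta> \<le> v a x"
  shows "phi_p p (v' a y) \<le> phi_p p ((v a y - v a x) / (y - x))"
proof -
  have "y \<le> T" using assms(3) \<epsilon>_le_T by simp
  then obtain \<xi> where \<xi>: "\<xi> \<in> {x<..<y}" "v a y - v a x = v' a \<xi> * (y - x)"
    using v_mvt[OF a_pos assms(1,2)] by blast
  have "0 \<le> h s * f (v a s)" if "s \<in> {\<xi>..y}" for s
  proof -
    have "v a x \<le> v a s"
      using strict_mono_on_leD[OF v_strict_mono_on_\<epsilon>, of x s] assms \<xi> that by simp
    then show ?thesis
      using h_pos[of s] f_nonneg[of "v a s"] assms \<xi> that \<epsilon>_le_T by simp
  qed
  then have "I a \<xi> \<le> I a y"
    using I_increment_ge[OF a_pos, of \<xi> y 0] assms \<xi> \<epsilon>_le_T by simp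
  then have "phi_p p (v' a y) \<le> phi_p p (v' a \<xi>)"
    using phi_v'_eq[OF a_pos, of y] phi_v'_eq[OF a_pos, of \<xi>] assms \<xi> \<epsilon>_le_T by simp
  also have "v' a \<xi> = (v a y - v a x) / (y - x)"
    using \<xi> assms by simp
  finally show ?thesis .
qed

lemma phi_v'_half_le:
  assumes "\<beta> \<le> v a (\<epsilon>/4)"
  shows "phi_p p (v' a (\<epsilon>/2)) \<le> phi_p p (4 * v a (\<epsilon>/2) / \<epsilon>)"
proof -
  have "phi_p p (v' a (\<epsilon>/2)) \<le> phi_p p ((v a (\<epsilon>/2) - v a (\<epsilon>/4)) / (\<epsilon>/2 - \<epsilon>/4))"
    using phi_v'_le_phi_slope[of "\<epsilon>/4" "\<epsilon>/2"] assms \<epsilon>_pos by simp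
  also have "\<dots> \<le> phi_p p (4 * v a (\<epsilon>/2) / \<epsilon>)"
  proof -
    have "(v a (\<epsilon>/2) - v a (\<epsilon>/4)) / (\<epsilon>/2 - \<epsilon>/4) \<le> 4 * v a (\<epsilon>/2) / \<epsilon>"
      using v_pos[of "\<epsilon>/4"] \<epsilon>_pos by (simp add: field_simps)
    then show ?thesis
      by (simp add: strict_mono_less_eq[OF strict_mono_phi_p[OF p_gt_1]])
  qed
  finally show ?thesis .
qed

lemma v_half_below:
  assumes \<beta>: "\<beta> \<le> v a (\<epsilon>/4)"
    and hmin: "0 < hmin" "\<forall>t\<in>{\<epsilon>/2..\<epsilon>}. hmin \<le> h t"
    and U: "\<forall>u\<ge>U. 2 * (4/\<epsilon>) powr (p - 1) / (hmin * \<epsilon>) * u powr (p - 1) \<le> f u"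
  shows "v a (\<epsilon>/2) < U"
proof (rule ccontr)
  define Y where "Y = v a (\<epsilon>/2)"
  assume "\<not> v a (\<epsilon>/2) < U"
  then have "U \<le> Y" unfolding Y_def by simp
  have "0 < Y" unfolding Y_def using v_pos \<epsilon>_pos by simp
  \<comment> \<open>chosen so that I gains at least (4 Y / eps) powr (p - 1) on [eps/2, eps]\<close>
  define c where "c = 2 * (4/\<epsilon>) powr (p - 1) / (hmin * \<epsilon>)"
  have "0 \<le> c" unfolding c_def using hmin \<epsilon>_pos by simp
  have "2 * (4 * Y / \<epsilon>) powr (p - 1) / \<epsilon> \<le> h s * f (v a s)" if s: "s \<in> {\<epsilon>/2..\<epsilon>}" for s
  proof -
    have "Y \<le> v a s"
      unfolding Y_def using strict_mono_on_leD[OF v_strict_mono_on_\<epsilon>, of "\<epsilon>/2" s] s \<epsilon>_pos by simp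
    then have "c * Y powr (p - 1) \<le> c * v a s powr (p - 1)"
      using \<open>0 < Y\<close> \<open>0 \<le> c\<close> p_gt_1 by (intro mult_left_mono powr_mono2) auto
    also have "\<dots> \<le> f (v a s)"
      using U \<open>U \<le> Y\<close> \<open>Y \<le> v a s\<close> unfolding c_def by simp
    finally have "c * Y powr (p - 1) \<le> f (v a s)" .
    moreover have "hmin \<le> h s" using hmin(2) s by blast
    ultimately have "hmin * (c * Y powr (p - 1)) \<le> h s * f (v a s)"
      using hmin(1) \<open>0 \<le> c\<close> by (intro mult_mono) auto
    moreover have "(4 * Y / \<epsilon>) powr (p - 1) = (4/\<epsilon>) powr (p - 1) * Y powr (p - 1)"
      using \<open>0 < Y\<close> \<epsilon>_pos by (simp add: powr_mult[symmetric])
    ultimately show ?thesis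
      using hmin \<epsilon>_pos unfolding c_def by (simp add: field_simps)
  qed
  then have "I a (\<epsilon>/2) + 2 * (4 * Y / \<epsilon>) powr (p - 1) / \<epsilon> * (\<epsilon> - \<epsilon>/2) \<le> I a \<epsilon>"
    using \<epsilon>_pos \<epsilon>_le_T by (intro I_increment_ge[OF a_pos]) auto
  then have "I a (\<epsilon>/2) + (4 * Y / \<epsilon>) powr (p - 1) \<le> I a \<epsilon>"
    using \<epsilon>_pos by (simp add: field_simps)
  moreover have "phi_p p (v' a (\<epsilon>/2)) \<le> (4 * Y / \<epsilon>) powr (p - 1)"
    using phi_v'_half_le[OF \<beta>] phi_p_nonneg_eq_powr \<open>0 < Y\<close> \<epsilon>_pos unfolding Y_def by simp
  ultimately have "phi_p p (v' a \<epsilon>) \<le> phi_p p 0"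
    using phi_v'_eq[OF a_pos, of \<epsilon>] phi_v'_eq[OF a_pos, of "\<epsilon>/2"] \<epsilon>_pos \<epsilon>_le_T
    by (simp add: phi_p_def)
  moreover have "phi_p p 0 < phi_p p (v' a \<epsilon>)"
    using v'_pos \<epsilon>_pos by (simp add: strict_mono_less[OF strict_mono_phi_p[OF p_gt_1]])
  ultimately show False by linarith
qed

lemma phi_a_le_of_v_half_le:
  assumes \<beta>: "\<beta> \<le> v a (\<epsilon>/4)" and "v a (\<epsilon>/2) \<le> U" and "0 \<le> C" and "\<forall>u\<in>{0<..U}. f u \<le> C"
  shows "phi_p p a \<le> phi_p p (4 * U / \<epsilon>) + C * Ch * (\<epsilon>/2) powr (\<gamma> + 1) / (\<gamma> + 1)"
proof -
  have "phi_p p (v' a (\<epsilon>/2)) \<le> phi_p p (4 * U / \<epsilon>)"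
  proof -
    have "4 * v a (\<epsilon>/2) / \<epsilon> \<le> 4 * U / \<epsilon>"
      using assms(2) \<epsilon>_pos by (simp add: divide_right_mono)
    with phi_v'_half_le[OF \<beta>] show ?thesis
      by (simp add: strict_mono_less_eq[OF strict_mono_phi_p[OF p_gt_1]])
  qed
  moreover have "f (v a s) \<le> C" if "s \<in> {0<..\<epsilon>/2}" for s
  proof -
    have "v a s \<le> v a (\<epsilon>/2)"
      using strict_mono_on_leD[OF v_strict_mono_on_\<epsilon>, of s "\<epsilon>/2"] that \<epsilon>_pos by simp
    with assms(2,4) v_pos[of s] that \<epsilon>_pos show ?thesis by simp
  qed
  then have "I a (\<epsilon>/2) \<le> C * Ch * (\<epsilon>/2) powr (\<gamma> + 1) / (\<gamma> + 1)"
    using I_le_power_bound[OF a_pos, of "\<epsilon>/2" C] assms(3) \<epsilon>_pos \<epsilon>_le_T by simp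
  ultimately show ?thesis
    using phi_v'_eq[OF a_pos, of "\<epsilon>/2"] \<epsilon>_pos \<epsilon>_le_T by simp
qed

end

lemma eventually_v'_nonpos_before:
  assumes \<epsilon>: "0 < \<epsilon>" "\<epsilon> \<le> T"
  shows "eventually (\<lambda>a. \<exists>t\<in>{0<..\<epsilon>}. v' a t \<le> 0) at_top"
proof -
  obtain hmin where hmin: "0 < hmin" "\<forall>t\<in>{\<epsilon>/2..\<epsilon>}. hmin \<le> h t"
    using h_bounded_below[of "\<epsilon>/2" \<epsilon>] \<epsilon> by auto
  obtain U where U: "\<forall>u\<ge>U. 2 * (4/\<epsilon>) powr (p - 1) / (hmin * \<epsilon>) * u powr (p - 1) \<le> f u"
    using f_superlinear unfolding eventually_at_top_linorder by blast
  obtain C where C: "0 \<le> C" "\<forall>u\<in>{0<..U}. f u \<le> C"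
    using f_bounded_above by blast
  define B where "B = phi_p p (4 * U / \<epsilon>) + C * Ch * (\<epsilon>/2) powr (\<gamma> + 1) / (\<gamma> + 1)"
  have "eventually (\<lambda>a. B < phi_p p a) at_top"
    using filterlim_phi_p_at_top[OF p_gt_1] by (simp add: filterlim_at_top_dense)
  moreover have "eventually (\<lambda>a. 4 * \<beta> / \<epsilon> \<le> a) at_top"
    by (rule eventually_ge_at_top)
  ultimately show ?thesis
    using eventually_gt_at_top[of 0]
  proof eventually_elim
    case (elim a)
    show ?case
    proof (rule ccontr)
      assume "\<not> ?case"
      then have v'_pos: "\<forall>t\<in>{0..\<epsilon>}. 0 < v' a t"
        using v'_0_pos[OF \<open>0 < a\<close>] by (metis atLeastAtMost_iff greaterThanAtMost_iff not_le order_less_le)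
      have "\<beta> \<le> a * (\<epsilon>/4)"
        using elim \<epsilon> by (simp add: field_simps)
      then have "\<beta> \<le> v a (\<epsilon>/4)"
        using v_reaches_\<beta>[OF \<open>0 < a\<close> \<epsilon> v'_pos, of "\<epsilon>/4"] \<epsilon> by simp
      then have "phi_p p a \<le> B"
        unfolding B_def
        using phi_a_le_of_v_half_le[OF \<open>0 < a\<close> \<epsilon> v'_pos] v_half_below[OF \<open>0 < a\<close> \<epsilon> v'_pos] hmin U C
        by (simp add: less_imp_le)
      with elim show False by simp
    qed
  qed
qed

definition first_zero :: "real \<Rightarrow> real" where
  "first_zero a = Inf {t \<in> {0..T}. v' a t = 0}"

lemma first_zero_props:
  assumes a: "0 < a" and t0: "t0 \<in> {0..T}" "v' a t0 \<le> 0"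
  shows "0 < first_zero a" "first_zero a \<le> t0" "v' a (first_zero a) = 0"
    "\<forall>t\<in>{0..<first_zero a}. 0 < v' a t"
proof -
  define Z where "Z = {t \<in> {0..T}. v' a t = 0}"
  have zero_below: "\<exists>z\<in>Z. z \<le> t" if "t \<in> {0..T}" "v' a t \<le> 0" for t
  proof -
    have "continuous_on {0..t} (v' a)"
      by (rule continuous_on_subset[OF v'_cont[OF a]]) (use that in auto)
    then have "\<exists>z\<ge>0. z \<le> t \<and> v' a z = 0"
      using IVT2'[of "v' a" t 0 0] that v'_0_pos[OF a] by auto
    then show ?thesis using that unfolding Z_def by auto
  qed
  obtain z where z: "z \<in> Z" "z \<le> t0" using zero_below[OF t0] by auto
  have "closed Z"
    unfolding Z_def by (rule continuous_closed_preimage_constant[OF v'_cont[OF a]]) auto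
  moreover have bdd: "bdd_below Z"
    unfolding Z_def by (rule bdd_belowI[of _ 0]) auto
  ultimately have in_Z: "first_zero a \<in> Z"
    unfolding first_zero_def Z_def[symmetric] using closed_contains_Inf z(1) by blast
  have le: "first_zero a \<le> z'" if "z' \<in> Z" for z'
    unfolding first_zero_def Z_def[symmetric] using cInf_lower[OF that bdd] .
  show "v' a (first_zero a) = 0" using in_Z unfolding Z_def by simp
  then show "0 < first_zero a"
    using in_Z v'_0_pos[OF a] unfolding Z_def by (metis atLeastAtMost_iff mem_Collect_eq order_less_le)
  show "first_zero a \<le> t0" using le[OF z(1)] z(2) by simp
  show "\<forall>t\<in>{0..<first_zero a}. 0 < v' a t"
  proof (rule ballI, rule ccontr)
    fix t
    assume t: "t \<in> {0..<first_zero a}" "\<not> 0 < v' a t"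
    moreover have "first_zero a \<le> T" using in_Z unfolding Z_def by simp
    ultimately obtain z' where "z' \<in> Z" "z' \<le> t" using zero_below[of t] by auto
    with le t show False by fastforce
  qed
qed

lemma eventually_first_zero_le:
  assumes "0 < \<epsilon>" "\<epsilon> \<le> T"
  shows "eventually (\<lambda>a. 0 < a \<and> 0 < first_zero a \<and> first_zero a \<le> \<epsilon> \<and> v' a (first_zero a) = 0
                            \<and> (\<forall>t\<in>{0..<first_zero a}. 0 < v' a t)) at_top"
  using eventually_v'_nonpos_before[OF assms] eventually_gt_at_top[of 0]
proof eventually_elim
  case (elim a)
  then obtain t0 where "t0 \<in> {0<..\<epsilon>}" "v' a t0 \<le> 0" by blast
  with first_zero_props[OF \<open>0 < a\<close>, of t0] assms elim show ?case by auto
qed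

lemma phi_a_le_at_first_zero:
  assumes a: "0 < a" and M: "0 < M" "M \<le> T" "v' a M = 0" "\<forall>t\<in>{0..<M}. 0 < v' a t"
    and "v a M \<le> B" "0 \<le> C" "\<forall>u\<in>{0<..B}. f u \<le> C"
  shows "phi_p p a \<le> C * Ch * T powr (\<gamma> + 1) / (\<gamma> + 1)"
proof -
  have "f (v a s) \<le> C" if "s \<in> {0<..M}" for s
  proof -
    have "v a 0 < v a s" "v a s \<le> v a M"
      using strict_mono_onD[OF v_strict_mono_on[OF a M(2,4)], of 0 s]
        strict_mono_on_leD[OF v_strict_mono_on[OF a M(2,4)], of s M] that by auto
    with assms v_0[OF a] show ?thesis by simp
  qed
  then have "I a M \<le> C * Ch * M powr (\<gamma> + 1) / (\<gamma> + 1)"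
    using I_le_power_bound[OF a] M assms(7) by simp
  also have "\<dots> \<le> C * Ch * T powr (\<gamma> + 1) / (\<gamma> + 1)"
    using assms(7) Ch_pos \<gamma>_gt M by (intro divide_right_mono mult_left_mono powr_mono2) auto
  finally show ?thesis
    using phi_v'_eq[OF a, of M] M by (simp add: phi_p_def)
qed

lemma first_zero_tendsto_0: "(first_zero \<longlongrightarrow> 0) at_top"
proof (rule tendstoI)
  fix e :: real
  assume "0 < e"
  with eventually_first_zero_le[of "min (e/2) T"] T_pos
  show "eventually (\<lambda>a. dist (first_zero a) 0 < e) at_top"
    by (auto elim: eventually_mono)
qed

lemma filterlim_v_first_zero_at_top: "filterlim (\<lambda>a. v a (first_zero a)) at_top at_top"
  unfolding filterlim_at_top
proof
  fix B
  obtain C where C: "0 \<le> C" "\<forall>u\<in>{0<..B}. f u \<le> C"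
    using f_bounded_above by blast
  have "eventually (\<lambda>a. C * Ch * T powr (\<gamma> + 1) / (\<gamma> + 1) < phi_p p a) at_top"
    using filterlim_phi_p_at_top[OF p_gt_1] by (simp add: filterlim_at_top_dense)
  with eventually_first_zero_le[OF T_pos order_refl]
  show "eventually (\<lambda>a. B \<le> v a (first_zero a)) at_top"
  proof eventually_elim
    case (elim a)
    show ?case
    proof (rule ccontr)
      assume "\<not> B \<le> v a (first_zero a)"
      then have "phi_p p a \<le> C * Ch * T powr (\<gamma> + 1) / (\<gamma> + 1)"
        using phi_a_le_at_first_zero[of a "first_zero a" B C] elim C by simp
      with elim show False by simp
    qed
  qed
qed

end

lemma loc_lipschitz_on_continuous_on:
  assumes "loc_lipschitz_on S g"
  shows "continuous_on S g"
  unfolding continuous_on_eq_continuous_within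
proof
  fix x
  assume "x \<in> S"
  then obtain e L where "0 < e"
    and L: "\<forall>y\<in>ball x e \<inter> S. \<forall>z\<in>ball x e \<inter> S. \<bar>g y - g z\<bar> \<le> L * \<bar>y - z\<bar>"
    using assms unfolding loc_lipschitz_on_def by blast
  have "\<bar>L\<bar>-lipschitz_on (ball x e \<inter> S) g"
  proof (rule lipschitz_onI)
    fix y z
    assume "y \<in> ball x e \<inter> S" "z \<in> ball x e \<inter> S"
    then have "\<bar>g y - g z\<bar> \<le> L * \<bar>y - z\<bar>" using L by blast
    also have "\<dots> \<le> \<bar>L\<bar> * \<bar>y - z\<bar>" by (simp add: mult_right_mono)
    finally show "dist (g y) (g z) \<le> \<bar>L\<bar> * dist y z" by (simp add: dist_real_def)
  qed simp
  then have "continuous (at x within ball x e \<inter> S) g"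
    by (rule lipschitz_on_continuous_within) (simp add: \<open>x \<in> S\<close> \<open>0 < e\<close>)
  moreover have "at x within ball x e \<inter> S = at x within S"
    by (rule at_within_nhd[of _ "ball x e"]) (auto simp: \<open>0 < e\<close>)
  ultimately show "continuous (at x within S) g" by simp
qed

lemma eventually_ge_powr_of_power_growth:
  fixes f g :: "real \<Rightarrow> real"
  assumes "q < l"
    and "\<exists>U. \<forall>u. U \<le> \<bar>u\<bar> \<longrightarrow> f u = \<bar>u\<bar> powr (l - 1) * u + g u"
    and "((\<lambda>u. \<bar>g u\<bar> / \<bar>u\<bar> powr l) \<longlongrightarrow> 0) at_top"
  shows "eventually (\<lambda>u. c * u powr q \<le> f u) at_top"
proof -
  obtain U where U: "\<forall>u. U \<le> \<bar>u\<bar> \<longrightarrow> f u = \<bar>u\<bar> powr (l - 1) * u + g u"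
    using assms(2) by blast
  have "eventually (\<lambda>u. \<bar>g u\<bar> / \<bar>u\<bar> powr l < 1/2) at_top"
    using order_tendstoD(2)[OF assms(3), of "1/2"] by simp
  moreover have "eventually (\<lambda>u. 2 * c \<le> u powr (l - q)) at_top"
    using real_powr_at_top[of "l - q"] assms(1) by (simp add: filterlim_at_top)
  ultimately show ?thesis
    using eventually_gt_at_top[of 0] eventually_ge_at_top[of U]
  proof eventually_elim
    case (elim u)
    have "\<bar>u\<bar> powr (l - 1) * u = u powr l"
      using \<open>0 < u\<close> by (simp add: powr_mult_base mult.commute)
    then have "u powr l / 2 \<le> f u"
      using elim U by (simp add: divide_less_eq)
    moreover have "u powr l = u powr (l - q) * u powr q"
      using \<open>0 < u\<close> by (simp add: powr_add[symmetric])
    ultimately show ?case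
      using mult_right_mono[OF \<open>2 * c \<le> u powr (l - q)\<close>, of "u powr q"] by simp
  qed
qed

lemma powr_ge_of_le_powr_inverse:
  fixes k R t :: real
  assumes "k < 0" "0 < t" "t \<le> R powr (1 / k)" "0 < R"
  shows "R \<le> t powr k"
proof -
  have "(R powr (1 / k)) powr k \<le> t powr k"
    using assms by (intro powr_mono2') auto
  with assms show ?thesis by (simp add: powr_powr)
qed

lemma hfun_arg_ge:
  fixes N :: nat
  assumes "1 < p" "p < real N" "0 < R" "t \<in> {0<..R powr ((p - real N) / (p - 1))}"
  shows "R \<le> t powr ((p - 1) / (p - real N))"
  using powr_ge_of_le_powr_inverse[of "(p - 1) / (p - real N)" t R] assms
  by (simp add: divide_pos_neg)

lemma hfun_pos:
  assumes "1 < p" "p < real N" "0 < R" "\<forall>r\<in>{R..}. 0 < K r"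
    and "t \<in> {0<..R powr ((p - real N) / (p - 1))}"
  shows "0 < hfun N p K t"
  using hfun_arg_ge[OF assms(1-3,5)] assms unfolding hfun_def by simp

lemma continuous_on_hfun:
  assumes "1 < p" "p < real N" "0 < R" "continuous_on {R..} K"
  shows "continuous_on {0<..R powr ((p - real N) / (p - 1))} (hfun N p K)"
proof -
  let ?S = "{0<..R powr ((p - real N) / (p - 1))}"
  have "continuous_on ?S (\<lambda>t. t powr ((p - 1) / (p - real N)))"
    by (intro continuous_intros) auto
  then have "continuous_on ?S (\<lambda>t. K (t powr ((p - 1) / (p - real N))))"
    by (rule continuous_on_compose2[OF assms(4)]) (use hfun_arg_ge[OF assms(1-3)] in auto)
  then show ?thesis
    unfolding hfun_def by (intro continuous_intros) auto
qed

lemma hfun_le_power: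
  assumes "1 < p" "p < real N" "0 < R" "0 < K1" "real N < \<alpha>1"
    and "\<forall>r\<in>{R..}. K r \<le> K1 / r powr \<alpha>1"
  shows "\<exists>C \<gamma>. 0 < C \<and> -1 < \<gamma> \<and>
           (\<forall>t\<in>{0<..R powr ((p - real N) / (p - 1))}. hfun N p K t \<le> C * t powr \<gamma>)"
proof (intro exI conjI ballI)
  define c where "c = ((real N - p) / (p - 1)) powr (- p)"
  define k where "k = (p - 1) / (p - real N)"
  define e where "e = p * (real N - 1) / (p - real N)"
  show "0 < c * K1" using assms unfolding c_def by simp
  have "e - k * \<alpha>1 = (p * (real N - 1) - \<alpha>1 * (p - 1)) / (p - real N)"
    unfolding e_def k_def by (simp add: diff_divide_distrib[symmetric] mult.commute)
  moreover have "p * (real N - 1) - \<alpha>1 * (p - 1) < (- 1) * (p - real N)"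
    using mult_strict_right_mono[of "real N" \<alpha>1 "p - 1"] assms by (simp add: algebra_simps)
  ultimately show "-1 < e - k * \<alpha>1"
    using assms by (simp add: neg_less_divide_eq)
  fix t
  assume t: "t \<in> {0<..R powr ((p - real N) / (p - 1))}"
  have "R \<le> t powr k" using hfun_arg_ge[OF assms(1-3) t] unfolding k_def .
  then have "K (t powr k) \<le> K1 / (t powr k) powr \<alpha>1"
    using assms(6) by auto
  then have "K (t powr k) \<le> K1 / t powr (k * \<alpha>1)"
    by (simp add: powr_powr)
  then have "hfun N p K t \<le> c * t powr e * (K1 / t powr (k * \<alpha>1))"
    unfolding hfun_def c_def e_def k_def using assms t by (intro mult_left_mono) auto
  also have "\<dots> = c * K1 * t powr (e - k * \<alpha>1)"
    by (simp add: powr_diff)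
  finally show "hfun N p K t \<le> c * K1 * t powr (e - k * \<alpha>1)" .
qed

theorem lemma2p5:
  fixes N :: nat and p l m \<beta> R K0 K1 \<alpha> \<alpha>1 :: real
    and f g1 g2 K K' :: "real \<Rightarrow> real"
    and v v' :: "real \<Rightarrow> real \<Rightarrow> real"
  assumes N: "N > 2" and p: "1 < p" "p < real N"
    and f_odd: "\<forall>u. u \<noteq> 0 \<longrightarrow> f (- u) = - f u"
    and f_lip: "loc_lipschitz_on (- {0}) f"
    and H1: "loc_lipschitz_on UNIV g1" "l > p - 1"
      "\<exists>U. \<forall>u. \<bar>u\<bar> \<ge> U \<longrightarrow> f u = \<bar>u\<bar> powr (l - 1) * u + g1 u"
      "((\<lambda>u. \<bar>g1 u\<bar> / \<bar>u\<bar> powr l) \<longlongrightarrow> 0) at_top"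
    and H2: "loc_lipschitz_on UNIV g2" "g2 0 = 0" "0 < m" "m < 1"
      "\<exists>\<delta>>0. \<forall>u. 0 < \<bar>u\<bar> \<and> \<bar>u\<bar> < \<delta> \<longrightarrow> f u = - 1 / (\<bar>u\<bar> powr (m - 1) * u) + g2 u"
    and H3: "\<beta> > 0" "f \<beta> = 0" "\<forall>u>0. f u = 0 \<longrightarrow> u = \<beta>"
      "\<forall>u. 0 < u \<and> u < \<beta> \<longrightarrow> f u < 0" "\<forall>u>\<beta>. f u > 0"
    and H4: "R > 0" "continuous_on {R..} K" "continuous_on {R..} K'"
      "\<forall>r\<in>{R..}. (K has_real_derivative K' r) (at r within {R..})"
      "\<forall>r\<in>{R..}. K r > 0"
      "\<forall>r\<in>{R..}. r * K' r / K r > - (real N - 1) * p / (p - 1)"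
      "K0 > 0" "K1 > 0"
      "\<forall>r\<in>{R..}. K0 / r powr \<alpha> \<le> K r \<and> K r \<le> K1 / r powr \<alpha>1"
      "real N + m * (real N - p) / (p - 1) < \<alpha>1" "\<alpha>1 \<le> \<alpha>" "\<alpha> < 2 * (real N - 1)"
    and sol: "\<forall>a>0. is_solution (hfun N p K) f p a (R powr ((p - real N) / (p - 1))) (v a) (v' a)"
  shows "\<exists>A. \<exists>M :: real \<Rightarrow> real.
           (\<forall>a>A. 0 < M a \<and> M a < R powr ((p - real N) / (p - 1)) \<and> v' a (M a) = 0 \<and>
                   (\<forall>t\<in>{0..<M a}. v' a t > 0)) \<and>
           (M \<longlongrightarrow> 0) at_top \<and>
           filterlim (\<lambda>a. v a (M a)) at_top at_top"
proof -
  define T where "T = R powr ((p - real N) / (p - 1))"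
  have "real N < \<alpha>1"
    using H4(10) divide_pos_pos[OF mult_pos_pos[OF H2(3)], of "real N - p" "p - 1"] p by linarith
  then obtain Ch \<gamma> where Ch: "0 < Ch" "-1 < \<gamma>" "\<forall>t\<in>{0<..T}. hfun N p K t \<le> Ch * t powr \<gamma>"
    using hfun_le_power[OF p H4(1) H4(8)] H4(9) unfolding T_def by blast
  interpret shooting_problem p \<gamma> Ch T \<beta> "hfun N p K" f v v'
  proof
    show "0 < T" unfolding T_def using H4(1) by simp
    show "hfun N p K 0 = 0" by (simp add: hfun_def)
    show "0 < hfun N p K t" if "t \<in> {0<..T}" for t
      using hfun_pos[OF p H4(1) H4(5)] that unfolding T_def by blast
    show "continuous_on {0<..T} (hfun N p K)"
      using continuous_on_hfun[OF p H4(1,2)] unfolding T_def .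
    show "continuous_on {0<..} f"
      using loc_lipschitz_on_continuous_on[OF f_lip] by (rule continuous_on_subset) auto
    show "eventually (\<lambda>u. c * u powr (p - 1) \<le> f u) at_top" for c
      using eventually_ge_powr_of_power_growth[OF H1(2) H1(3,4)] .
  qed (use p(1) Ch H3(1,2,4,5) sol in \<open>simp_all add: T_def\<close>)
  obtain A where A: "\<forall>a>A. 0 < a \<and> 0 < first_zero a \<and> first_zero a \<le> T/2 \<and>
      v' a (first_zero a) = 0 \<and> (\<forall>t\<in>{0..<first_zero a}. 0 < v' a t)"
    using eventually_first_zero_le[of "T/2"] T_pos by (auto simp: eventually_at_top_dense)
  show ?thesis
  proof (intro exI conjI)
    show "\<forall>a>A. 0 < first_zero a \<and> first_zero a < R powr ((p - real N) / (p - 1)) \<and>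
        v' a (first_zero a) = 0 \<and> (\<forall>t\<in>{0..<first_zero a}. 0 < v' a t)"
      using A T_pos unfolding T_def by fastforce
  qed (fact first_zero_tendsto_0 filterlim_v_first_zero_at_top)+
qed

end
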